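(* Let $p$ be a prime, let $(\mathcal G,\Gamma)$ be a finite proper reduced tree of pro-$p$ groups, $G=\Pi_1(\mathcal G,\Gamma)$, and let $V$ be a minimal (with respect to inclusion) subset of $V(\Gamma)$ such that $G=\langle\mathcal G(v)\mid v\in V\rangle$. Then $V$ contains all pending vertices of $\Gamma$ and $|V|\leq d(G)$.
   Context: A finite tree of pro-$p$ groups $(\mathcal G,\Gamma)$: a finite tree $\Gamma$, pro-$p$ groups $\mathcal G(v),\mathcal G(e)$ and monomorphisms $\partial_i:\mathcal G(e)\to\mathcal G(d_i(e))$ into the endpoint groups; its fundamental pro-$p$ group is generated by the vertex groups with the identifications $\partial_0(g)=\partial_1(g)$. Proper: vertex groups embed in $\Pi_1$. Reduced: for every edge, neither $\partial_0$ nor $\partial_1$ is an isomorphism. A pending vertex is a vertex with exactly one incident edge. $d(G)$ is the minimal number of topological generators; generation is topological. *)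

theory Defs
  imports "HOL-Analysis.Analysis" "HOL-Algebra.Generated_Groups" "HOL-Algebra.Coset" "HOL-Library.Extended_Nat"
begin

definition topgroup :: "('a, 'b) monoid_scheme \<Rightarrow> 'a topology \<Rightarrow> bool" where
  "topgroup G T \<longleftrightarrow> group G \<and> topspace T = carrier G \<and>
     continuous_map (prod_topology T T) T (\<lambda>(x, y). x \<otimes>\<^bsub>G\<^esub> y) \<and>
     continuous_map T T (\<lambda>x. inv\<^bsub>G\<^esub> x)"

definition profinite_group :: "('a, 'b) monoid_scheme \<Rightarrow> 'a topology \<Rightarrow> bool" where
  "profinite_group G T \<longleftrightarrow> topgroup G T \<and> compact_space T \<and> Hausdorff_space T \<and>
     (\<forall>x \<in> topspace T. connected_component_of_set T x = {x})"

definition pro_p_group :: "nat \<Rightarrow> ('a, 'b) monoid_scheme \<Rightarrow> 'a topology \<Rightarrow> bool" where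
  "pro_p_group p G T \<longleftrightarrow> Factorial_Ring.prime p \<and> profinite_group G T \<and>
     (\<forall>N. normal N G \<and> openin T N \<longrightarrow> (\<exists>k. card (rcosets\<^bsub>G\<^esub> N) = p ^ k))"

definition cont_hom ::
  "('a, 'b) monoid_scheme \<Rightarrow> 'a topology \<Rightarrow> ('c, 'd) monoid_scheme \<Rightarrow> 'c topology \<Rightarrow> ('a \<Rightarrow> 'c) \<Rightarrow> bool" where
  "cont_hom G T H S f \<longleftrightarrow> f \<in> hom G H \<and> continuous_map T S f"

definition cont_mono ::
  "('a, 'b) monoid_scheme \<Rightarrow> 'a topology \<Rightarrow> ('c, 'd) monoid_scheme \<Rightarrow> 'c topology \<Rightarrow> ('a \<Rightarrow> 'c) \<Rightarrow> bool" where
  "cont_mono G T H S f \<longleftrightarrow> cont_hom G T H S f \<and> inj_on f (carrier G)"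

definition finite_p_group :: "nat \<Rightarrow> ('a, 'b) monoid_scheme \<Rightarrow> bool" where
  "finite_p_group p H \<longleftrightarrow> group H \<and> finite (carrier H) \<and> (\<exists>k. card (carrier H) = p ^ k)"

text \<open>Topological generation and the minimal number of topological generators d(G)
  (as an extended natural; \<infinity> if G is not finitely generated).\<close>
definition top_generates :: "('a, 'b) monoid_scheme \<Rightarrow> 'a topology \<Rightarrow> 'a set \<Rightarrow> bool" where
  "top_generates G T Y \<longleftrightarrow> Y \<subseteq> carrier G \<and> T closure_of (generate G Y) = carrier G"

definition dgen :: "('a, 'b) monoid_scheme \<Rightarrow> 'a topology \<Rightarrow> enat" where
  "dgen G T = Inf {enat (card Y) | Y. finite Y \<and> top_generates G T Y}"

text \<open>A graph with vertex set Vs, edge set Es, and endpoint maps d0 d1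
  (each edge e joins d0 e and d1 e).\<close>

definition connected_graph :: "'v set \<Rightarrow> 'e set \<Rightarrow> ('e \<Rightarrow> 'v) \<Rightarrow> ('e \<Rightarrow> 'v) \<Rightarrow> bool" where
  "connected_graph Vs Es d0 d1 \<longleftrightarrow>
     (\<forall>u \<in> Vs. \<forall>w \<in> Vs. (u, w) \<in> ({(d0 e, d1 e) | e. e \<in> Es} \<union> {(d1 e, d0 e) | e. e \<in> Es})\<^sup>*)"

text \<open>A circuit: a nonempty list of pairwise distinct edges es and vertices vs
  with |vs| = |es| + 1, closed (first = last vertex), edge i joins vs!i and vs!(i+1),
  and the vertices vs!0 .. vs!(n-1) pairwise distinct.  (Loops and multiple edges are circuits.)\<close>
definition has_circuit :: "'v set \<Rightarrow> 'e set \<Rightarrow> ('e \<Rightarrow> 'v) \<Rightarrow> ('e \<Rightarrow> 'v) \<Rightarrow> bool" where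
  "has_circuit Vs Es d0 d1 \<longleftrightarrow>
     (\<exists>es vs. es \<noteq> [] \<and> distinct es \<and> set es \<subseteq> Es \<and> length vs = Suc (length es) \<and>
        hd vs = last vs \<and> distinct (butlast vs) \<and>
        (\<forall>i < length es. (d0 (es ! i) = vs ! i \<and> d1 (es ! i) = vs ! Suc i) \<or>
                         (d1 (es ! i) = vs ! i \<and> d0 (es ! i) = vs ! Suc i)))"

definition finite_tree :: "'v set \<Rightarrow> 'e set \<Rightarrow> ('e \<Rightarrow> 'v) \<Rightarrow> ('e \<Rightarrow> 'v) \<Rightarrow> bool" where
  "finite_tree Vs Es d0 d1 \<longleftrightarrow> finite Vs \<and> finite Es \<and> Vs \<noteq> {} \<and>
     (\<forall>e \<in> Es. d0 e \<in> Vs \<and> d1 e \<in> Vs) \<and>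
     connected_graph Vs Es d0 d1 \<and> \<not> has_circuit Vs Es d0 d1"

definition pending_vertex :: "'v set \<Rightarrow> 'e set \<Rightarrow> ('e \<Rightarrow> 'v) \<Rightarrow> ('e \<Rightarrow> 'v) \<Rightarrow> 'v \<Rightarrow> bool" where
  "pending_vertex Vs Es d0 d1 v \<longleftrightarrow> v \<in> Vs \<and> card {e \<in> Es. d0 e = v \<or> d1 e = v} = 1"

definition tree_of_pro_p_groups ::
  "nat \<Rightarrow> 'v set \<Rightarrow> 'e set \<Rightarrow> ('e \<Rightarrow> 'v) \<Rightarrow> ('e \<Rightarrow> 'v) \<Rightarrow>
   ('v \<Rightarrow> ('a, 'b) monoid_scheme) \<Rightarrow> ('v \<Rightarrow> 'a topology) \<Rightarrow>
   ('e \<Rightarrow> ('a, 'b) monoid_scheme) \<Rightarrow> ('e \<Rightarrow> 'a topology) \<Rightarrow>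
   ('e \<Rightarrow> 'a \<Rightarrow> 'a) \<Rightarrow> ('e \<Rightarrow> 'a \<Rightarrow> 'a) \<Rightarrow> bool" where
  "tree_of_pro_p_groups p Vs Es d0 d1 VG VT EG ET b0 b1 \<longleftrightarrow>
     finite_tree Vs Es d0 d1 \<and>
     (\<forall>v \<in> Vs. pro_p_group p (VG v) (VT v)) \<and>
     (\<forall>e \<in> Es. pro_p_group p (EG e) (ET e) \<and>
        cont_mono (EG e) (ET e) (VG (d0 e)) (VT (d0 e)) (b0 e) \<and>
        cont_mono (EG e) (ET e) (VG (d1 e)) (VT (d1 e)) (b1 e))"

text \<open>Reduced: no edge map is an isomorphism (the edge maps being monomorphisms,
  this means neither is surjective).\<close>
definition reduced_tree ::
  "'e set \<Rightarrow> ('e \<Rightarrow> 'v) \<Rightarrow> ('e \<Rightarrow> 'v) \<Rightarrow> ('v \<Rightarrow> ('a, 'b) monoid_scheme) \<Rightarrow>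
   ('e \<Rightarrow> ('a, 'b) monoid_scheme) \<Rightarrow> ('e \<Rightarrow> 'a \<Rightarrow> 'a) \<Rightarrow> ('e \<Rightarrow> 'a \<Rightarrow> 'a) \<Rightarrow> bool" where
  "reduced_tree Es d0 d1 VG EG b0 b1 \<longleftrightarrow>
     (\<forall>e \<in> Es. b0 e ` carrier (EG e) \<noteq> carrier (VG (d0 e)) \<and>
               b1 e ` carrier (EG e) \<noteq> carrier (VG (d1 e)))"

definition compatible_family ::
  "'v set \<Rightarrow> 'e set \<Rightarrow> ('e \<Rightarrow> 'v) \<Rightarrow> ('e \<Rightarrow> 'v) \<Rightarrow>
   ('v \<Rightarrow> ('a, 'b) monoid_scheme) \<Rightarrow> ('v \<Rightarrow> 'a topology) \<Rightarrow>
   ('e \<Rightarrow> ('a, 'b) monoid_scheme) \<Rightarrow> ('e \<Rightarrow> 'a \<Rightarrow> 'a) \<Rightarrow> ('e \<Rightarrow> 'a \<Rightarrow> 'a) \<Rightarrow>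
   ('c, 'd) monoid_scheme \<Rightarrow> 'c topology \<Rightarrow> ('v \<Rightarrow> 'a \<Rightarrow> 'c) \<Rightarrow> bool" where
  "compatible_family Vs Es d0 d1 VG VT EG b0 b1 H S f \<longleftrightarrow>
     (\<forall>v \<in> Vs. cont_hom (VG v) (VT v) H S (f v)) \<and>
     (\<forall>e \<in> Es. \<forall>g \<in> carrier (EG e). f (d0 e) (b0 e g) = f (d1 e) (b1 e g))"

text \<open>Since every pro-p group is the inverse limit of its finite continuous
  quotients, it suffices (and is equivalent) to test the universal property against finite
  p-groups with the discrete topology; every finite group is isomorphic to one with
  carrier in nat, so we take test groups of element type nat.\<close>
definition fundamental_pro_p_group ::
  "nat \<Rightarrow> 'v set \<Rightarrow> 'e set \<Rightarrow> ('e \<Rightarrow> 'v) \<Rightarrow> ('e \<Rightarrow> 'v) \<Rightarrow>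
   ('v \<Rightarrow> ('a, 'b) monoid_scheme) \<Rightarrow> ('v \<Rightarrow> 'a topology) \<Rightarrow>
   ('e \<Rightarrow> ('a, 'b) monoid_scheme) \<Rightarrow> ('e \<Rightarrow> 'a \<Rightarrow> 'a) \<Rightarrow> ('e \<Rightarrow> 'a \<Rightarrow> 'a) \<Rightarrow>
   ('g, 'h) monoid_scheme \<Rightarrow> 'g topology \<Rightarrow> ('v \<Rightarrow> 'a \<Rightarrow> 'g) \<Rightarrow> bool" where
  "fundamental_pro_p_group p Vs Es d0 d1 VG VT EG b0 b1 G T iota \<longleftrightarrow>
     pro_p_group p G T \<and>
     compatible_family Vs Es d0 d1 VG VT EG b0 b1 G T iota \<and>
     (\<forall>(H :: nat monoid) f. finite_p_group p H \<and>
        compatible_family Vs Es d0 d1 VG VT EG b0 b1 H (discrete_topology (carrier H)) f \<longrightarrow>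
        (\<exists>!phi. phi \<in> extensional (carrier G) \<and>
           cont_hom G T H (discrete_topology (carrier H)) phi \<and>
           (\<forall>v \<in> Vs. \<forall>x \<in> carrier (VG v). phi (iota v x) = f v x)))"

definition proper_tree ::
  "'v set \<Rightarrow> ('v \<Rightarrow> ('a, 'b) monoid_scheme) \<Rightarrow> ('v \<Rightarrow> 'a \<Rightarrow> 'g) \<Rightarrow> bool" where
  "proper_tree Vs VG iota \<longleftrightarrow> (\<forall>v \<in> Vs. inj_on (iota v) (carrier (VG v)))"

definition generated_by_vertices ::
  "('g, 'h) monoid_scheme \<Rightarrow> 'g topology \<Rightarrow> ('v \<Rightarrow> ('a, 'b) monoid_scheme) \<Rightarrow>
   ('v \<Rightarrow> 'a \<Rightarrow> 'g) \<Rightarrow> 'v set \<Rightarrow> bool" where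
  "generated_by_vertices G T VG iota V \<longleftrightarrow>
     top_generates G T (\<Union>v \<in> V. iota v ` carrier (VG v))"

end

(* Continuous characters G -> Z/p of a pro-p group separate G from every proper closed subgroup:
   pass to a finite p-group quotient G/N, where a maximal subgroup containing the image is normal
   of index p.

   If a pending vertex v were missing from V, a character of G(v) that kills the image of the
   unique edge group at v, extended by zero to the other vertex groups, is a compatible family; it
   induces a character of G that kills the generating vertex groups G(u), u in V, but not G(v).

   For the bound, minimality of V yields characters psi_v and elements a_v of G(v) with
   psi_u(a_v) <> 0 iff u = v.  The p^|V| combinations sum_v c_v psi_v are then pairwise distinct,
   and each is determined by its values on any topological generating set Y, so p^|V| <= p^|Y|. *)

theory Submission
  imports Defs "HOL-Algebra.Group_Action" "HOL-Algebra.Multiplicative_Group" "HOL-Number_Theory.Cong"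
begin

section \<open>Finite p-groups\<close>

text \<open>\<open>\<int>/n\<close> on the carrier \<open>{..<n} :: nat set\<close>, since the universal property of
  \<^const>\<open>fundamental_pro_p_group\<close> is stated for test groups with elements of type \<^typ>\<open>nat\<close>.\<close>

definition Zmod :: "nat \<Rightarrow> nat monoid" where
  "Zmod n = \<lparr>carrier = {..<n}, mult = (\<lambda>x y. (x + y) mod n), one = 0\<rparr>"

lemma Zmod_simps [simp]:
  "carrier (Zmod n) = {..<n}" "x \<otimes>\<^bsub>Zmod n\<^esub> y = (x + y) mod n" "\<one>\<^bsub>Zmod n\<^esub> = 0"
  by (auto simp: Zmod_def)

lemma group_Zmod: "0 < n \<Longrightarrow> group (Zmod n)"
proof (rule groupI)
  fix x assume "0 < n" "x \<in> carrier (Zmod n)"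
  then show "\<exists>y\<in>carrier (Zmod n). y \<otimes>\<^bsub>Zmod n\<^esub> x = \<one>\<^bsub>Zmod n\<^esub>"
    by (intro bexI[of _ "(n - x) mod n"]) (auto simp: mod_add_left_eq)
qed (auto simp: mod_add_left_eq mod_add_right_eq add.assoc)

lemma finite_p_group_Zmod: "prime p \<Longrightarrow> finite_p_group p (Zmod p)"
  unfolding finite_p_group_def using group_Zmod prime_gt_0_nat by (auto intro: exI[of _ 1])

lemma prime_dvd_if_dvd_prime_power:
  fixes p d :: nat
  assumes "prime p" "d dvd p ^ n" "d \<noteq> 1"
  shows "p dvd d"
proof -
  obtain i where "d = p ^ i" using assms(1,2) divides_primepow_nat by blast
  with assms(3) show ?thesis by (cases i) auto
qed

lemma (in group_action) prime_dvd_card_moved_points: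
  assumes "finite E" "prime p" "order G = p ^ n"
  shows "p dvd card {x \<in> E. \<exists>g\<in>carrier G. \<phi> g x \<noteq> x}"
proof -
  define F where "F = {x \<in> E. \<exists>g\<in>carrier G. \<phi> g x \<noteq> x}"
  have fixed_iff: "orbit G \<phi> x = {x} \<longleftrightarrow> x \<notin> F" if "x \<in> E" for x
    using that orbit_refl[OF that] unfolding orbit_def F_def by auto
  have "card F = (\<Sum>x\<in>E. if x \<in> F then 1 else 0)"
    by (rule card_as_sums) (auto simp: F_def assms(1))
  also have "\<dots> = (\<Sum>Orb\<in>orbits G E \<phi>. \<Sum>x\<in>Orb. if x \<in> F then 1 else 0)"
    by (rule disjoint_sum[OF assms(1), symmetric])
  also have "p dvd \<dots>"
  proof (rule dvd_sum)
    fix Orb assume "Orb \<in> orbits G E \<phi>"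
    then obtain x where x: "x \<in> E" "Orb = orbit G \<phi> x" unfolding orbits_def by blast
    have OE: "Orb \<subseteq> E" using x element_image unfolding orbit_def by blast
    show "p dvd (\<Sum>y\<in>Orb. if y \<in> F then 1 else 0)"
    proof (cases "x \<in> F")
      case False
      then have "Orb = {x}" using fixed_iff x by simp
      then show ?thesis using False by simp
    next
      case True
      have "Orb \<subseteq> F"
      proof
        fix y assume y: "y \<in> Orb"
        show "y \<in> F"
        proof (rule ccontr)
          assume "y \<notin> F"
          then have "orbit G \<phi> y = {y}" using fixed_iff y OE by blast
          moreover have "x \<in> orbit G \<phi> y" using orbit_sym x y OE by blast
          ultimately show False using True \<open>y \<notin> F\<close> by simp
        qed
      qed
      then have "(\<Sum>y\<in>Orb. if y \<in> F then 1 else 0) = card Orb" by (simp add: subset_iff)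
      moreover have "card Orb dvd p ^ n"
        using orbit_stabilizer_theorem[OF x(1)] x(2) assms(3) by (metis dvd_triv_left)
      moreover have "card Orb \<noteq> 1"
        using fixed_iff[OF x(1)] True x orbit_refl by (metis card_1_singletonE singletonD)
      ultimately show ?thesis using prime_dvd_if_dvd_prime_power[OF assms(2)] by auto
    qed
  qed
  finally show ?thesis unfolding F_def .
qed

lemma (in group) finite_subgroupI:
  assumes "finite (carrier G)" "H \<subseteq> carrier G" "\<one> \<in> H"
    and mult: "\<And>a b. a \<in> H \<Longrightarrow> b \<in> H \<Longrightarrow> a \<otimes> b \<in> H"
  shows "subgroup H G"
proof (rule subgroupI)
  show "H \<subseteq> carrier G" "H \<noteq> {}" using assms(2,3) by auto
  fix a assume a: "a \<in> H"
  then have ac: "a \<in> carrier G" using assms(2) by auto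
  have pow_in: "a [^] (n::nat) \<in> H" for n
    by (induction n) (use a assms(3) mult in auto)
  have "a [^] (ord a - 1) \<otimes> a = a [^] Suc (ord a - 1)" using ac by simp
  also have "\<dots> = \<one>" using ac ord_ge_1[OF assms(1) ac] by simp
  finally have "a [^] (ord a - 1) \<otimes> a = \<one>" .
  then have "inv a = a [^] (ord a - 1)" using ac by (intro inv_equality) auto
  then show "inv a \<in> H" using pow_in by simp
qed (rule mult)

lemma (in group) group_action_rcosets_right_mult:
  assumes M: "subgroup M G"
  shows "group_action (G\<lparr>carrier := M\<rparr>) (rcosets M) (\<lambda>m. \<lambda>X\<in>rcosets M. X #> inv m)"
    (is "group_action ?M ?E ?\<phi>")
proof -
  interpret M: subgroup M G by (rule M)
  have E_closed: "X #> g \<in> ?E" if X: "X \<in> ?E" and g: "g \<in> carrier G" for X g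
  proof -
    obtain a where "a \<in> carrier G" "X = M #> a" using X unfolding RCOSETS_def by auto
    then show ?thesis using g M.subset by (simp add: coset_mult_assoc rcosetsI)
  qed
  have E_carrier: "X \<subseteq> carrier G" if "X \<in> ?E" for X
    using that M.rcosets_carrier[OF is_group] by auto
  have \<phi>_Bij: "?\<phi> m \<in> Bij ?E" if "m \<in> M" for m
  proof -
    have mc: "m \<in> carrier G" using that M.subset by auto
    have "bij_betw (\<lambda>X. X #> inv m) ?E ?E"
      by (rule bij_betw_byWitness[where f'="\<lambda>X. X #> m"])
        (use mc E_closed E_carrier in \<open>auto simp: coset_mult_assoc\<close>)
    then have "bij_betw (?\<phi> m) ?E ?E" by (rule bij_betw_cong[THEN iffD1, rotated]) auto
    then show ?thesis unfolding Bij_def by auto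
  qed
  show ?thesis
    unfolding group_action_def group_hom_def group_hom_axioms_def
  proof (intro conjI group_BijGroup homI)
    show "group ?M" by (rule subgroup_imp_group[OF M])
    show "?\<phi> m \<in> carrier (BijGroup ?E)" if "m \<in> carrier ?M" for m
      using that \<phi>_Bij by (simp add: BijGroup_def)
    fix a b assume "a \<in> carrier ?M" "b \<in> carrier ?M"
    then have ab: "a \<in> M" "b \<in> M" "a \<in> carrier G" "b \<in> carrier G" using M.subset by auto
    have "?\<phi> a \<otimes>\<^bsub>BijGroup ?E\<^esub> ?\<phi> b = compose ?E (?\<phi> a) (?\<phi> b)"
      using \<phi>_Bij ab by (simp add: BijGroup_def)
    also have "\<dots> = ?\<phi> (a \<otimes> b)"
      unfolding compose_def
      using ab E_closed E_carrier by (auto intro!: ext simp: coset_mult_assoc inv_mult_group)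
    finally show "?\<phi> (a \<otimes>\<^bsub>?M\<^esub> b) = ?\<phi> a \<otimes>\<^bsub>BijGroup ?E\<^esub> ?\<phi> b" by simp
  qed
qed

lemma (in group) prime_dvd_card_rcosets_fixed_by_subgroup:
  assumes p: "prime p" and order: "order G = p ^ k"
    and M: "subgroup M G" "M \<noteq> carrier G"
  shows "p dvd card {X \<in> rcosets M. \<forall>m\<in>M. X #> m = X}"
proof -
  interpret M: subgroup M G by (rule M(1))
  have fin: "finite (carrier G)"
    using order p order_gt_0_iff_finite prime_gt_0_nat by force
  define MG where "MG = G\<lparr>carrier := M\<rparr>"
  define E where "E = rcosets M"
  define \<phi> where "\<phi> m = (\<lambda>X\<in>E. X #> inv m)" for m
  interpret act: group_action MG E \<phi>
    unfolding MG_def E_def \<phi>_def by (rule group_action_rcosets_right_mult[OF M(1)])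
  have finE: "finite E"
    unfolding E_def using fin rcosets_subset_PowG[OF M(1)] by (meson finite_Pow_iff finite_subset)
  have lagrangeM: "card E * card M = p ^ k" using lagrange[OF M(1)] order unfolding E_def by simp
  then obtain i where "card M = p ^ i" using divides_primepow_nat[OF p] by (metis dvd_triv_right)
  then have "order MG = p ^ i" unfolding order_def MG_def by simp
  define moved where "moved = {X \<in> E. \<exists>m\<in>carrier MG. \<phi> m X \<noteq> X}"
  have p_moved: "p dvd card moved"
    unfolding moved_def by (rule act.prime_dvd_card_moved_points[OF finE p \<open>order MG = p ^ i\<close>])
  have "card E \<noteq> 1"
  proof
    assume "card E = 1"
    then have "card M = card (carrier G)" using lagrangeM order by (simp add: order_def)
    then show False using M(2) M.subset fin by (metis card_subset_eq)
  qed
  then have p_E: "p dvd card E" using prime_dvd_if_dvd_prime_power[OF p] lagrangeM by (metis dvd_triv_left)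
  have "X #> m = X" if "X \<in> E - moved" "m \<in> M" for X m
  proof -
    from that(1) have "\<forall>m'\<in>M. X #> inv m' = X" unfolding moved_def \<phi>_def MG_def by auto
    then have "X #> inv (inv m) = X" using M.m_inv_closed[OF that(2)] by blast
    then show ?thesis using that(2) M.subset by (simp add: subset_iff)
  qed
  moreover have "X \<notin> moved" if "X \<in> E" "\<forall>m\<in>M. X #> m = X" for X
    using that M.m_inv_closed unfolding moved_def \<phi>_def MG_def by auto
  ultimately have "{X \<in> rcosets M. \<forall>m\<in>M. X #> m = X} = E - moved" unfolding E_def by blast
  moreover have "moved \<subseteq> E" unfolding moved_def by auto
  ultimately show ?thesis using p_E p_moved finE by (simp add: card_Diff_subset finite_subset)
qed

lemma (in group) subgroup_normalizer_finite:
  assumes fin: "finite (carrier G)" and M: "M \<subseteq> carrier G"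
  shows "subgroup {y \<in> carrier G. \<forall>m\<in>M. y \<otimes> m \<otimes> inv y \<in> M} G"
proof (rule finite_subgroupI[OF fin])
  fix a b assume ab: "a \<in> {y \<in> carrier G. \<forall>m\<in>M. y \<otimes> m \<otimes> inv y \<in> M}"
    "b \<in> {y \<in> carrier G. \<forall>m\<in>M. y \<otimes> m \<otimes> inv y \<in> M}"
  then have abc: "a \<in> carrier G" "b \<in> carrier G" by auto
  have "a \<otimes> (b \<otimes> m \<otimes> inv b) \<otimes> inv a \<in> M" if "m \<in> M" for m using ab that by auto
  then show "a \<otimes> b \<in> {y \<in> carrier G. \<forall>m\<in>M. y \<otimes> m \<otimes> inv y \<in> M}"
    using abc M by (auto simp: m_assoc inv_mult_group subset_iff)
qed (use M in auto)

text \<open>The coset \<open>M\<close> is fixed by the action of \<open>M\<close> on \<open>G/M\<close>, and the number of fixed cosets is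
  divisible by \<open>p\<close>, so some \<open>M #> g \<noteq> M\<close> is fixed; such a \<open>g\<close> normalizes \<open>M\<close>.\<close>
lemma (in group) maximal_subgroup_of_p_group_is_normal:
  assumes p: "prime p" and order: "order G = p ^ k"
    and M: "subgroup M G" "M \<noteq> carrier G"
    and maximal: "\<And>S. subgroup S G \<Longrightarrow> M \<subseteq> S \<Longrightarrow> S \<noteq> carrier G \<Longrightarrow> S = M"
  shows "M \<lhd> G"
proof -
  interpret M: subgroup M G by (rule M(1))
  have fin: "finite (carrier G)"
    using order p order_gt_0_iff_finite prime_gt_0_nat by force
  define fixed where "fixed = {X \<in> rcosets M. \<forall>m\<in>M. X #> m = X}"
  have "p dvd card fixed"
    unfolding fixed_def by (rule prime_dvd_card_rcosets_fixed_by_subgroup[OF p order M])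
  moreover have "M \<in> fixed"
    using M.subgroup_in_rcosets[OF is_group] M.rcos_const[OF is_group] unfolding fixed_def by auto
  moreover have "finite fixed"
    unfolding fixed_def using fin rcosets_subset_PowG[OF M(1)]
    by (metis (no_types, lifting) finite_Pow_iff finite_subset mem_Collect_eq subsetI)
  ultimately have "card fixed \<ge> 2"
    using prime_ge_2_nat[OF p] by (metis card_gt_0_iff dvd_imp_le empty_iff order_trans)
  then have "\<not> fixed \<subseteq> {M}" using card_mono[of "{M}" fixed] by auto
  then obtain g where g: "g \<in> carrier G" "M #> g \<in> fixed" "M #> g \<noteq> M"
    unfolding fixed_def RCOSETS_def by blast
  have g_normalizes: "g \<otimes> m \<otimes> inv g \<in> M" if m: "m \<in> M" for m
  proof -
    have mc: "m \<in> carrier G" using m M.subset by auto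
    have "M #> g #> m = M #> g" using g(2) m unfolding fixed_def by auto
    then have "M #> (g \<otimes> m) = M #> g" using g(1) mc M.subset by (simp add: coset_mult_assoc)
    then have "g \<otimes> m \<in> M #> g"
      using g m M.subset repr_independenceD[OF M(1)] by auto
    then show ?thesis using M.rcos_module_imp[OF is_group g(1)] by blast
  qed
  define N where "N = {y \<in> carrier G. \<forall>m\<in>M. y \<otimes> m \<otimes> inv y \<in> M}"
  have "subgroup N G" unfolding N_def by (rule subgroup_normalizer_finite[OF fin M.subset])
  moreover have "M \<subseteq> N" unfolding N_def using M.subset by auto
  moreover have "g \<in> N" unfolding N_def using g(1) g_normalizes by auto
  moreover have "g \<notin> M" using g(3) M.rcos_const[OF is_group] by auto
  ultimately have "N = carrier G" using maximal by blast
  then show ?thesis unfolding normal_inv_iff N_def using M(1) by blast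
qed

lemma (in group) cyclic_group_hom_Zmod:
  assumes x: "x \<in> carrier G" and cyclic: "carrier G = {x [^] (i::nat) | i. True}"
    and n: "1 < n" "n dvd ord x"
  shows "\<exists>\<psi> \<in> hom G (Zmod n). \<psi> x = 1"
proof -
  have pow_mod: "i mod n = j mod n" if "x [^] i = x [^] j" for i j :: nat
  proof -
    have "int (ord x) dvd int j - int i"
      using that int_pow_eq[OF x, of "int i" "int j"] by (simp add: int_pow_int)
    then have "int n dvd int j - int i" using n(2) by (meson dvd_trans of_nat_dvd_iff)
    then have "[int j = int i] (mod int n)" by (simp add: cong_iff_dvd_diff)
    then have "[j = i] (mod n)" using cong_int_iff by blast
    then show ?thesis by (simp add: cong_def)
  qed
  define \<psi> where "\<psi> g = (SOME i. g = x [^] (i::nat)) mod n" for g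
  have \<psi>_pow: "\<psi> (x [^] i) = i mod n" for i :: nat
    using pow_mod someI[of "\<lambda>j. x [^] i = x [^] (j::nat)" i] unfolding \<psi>_def by metis
  have "\<psi> \<in> hom G (Zmod n)"
  proof (rule homI)
    show "\<psi> g \<in> carrier (Zmod n)" for g using n(1) by (simp add: \<psi>_def)
    fix g h assume "g \<in> carrier G" "h \<in> carrier G"
    then obtain i j where "g = x [^] (i::nat)" "h = x [^] (j::nat)" using cyclic by blast
    then show "\<psi> (g \<otimes> h) = \<psi> g \<otimes>\<^bsub>Zmod n\<^esub> \<psi> h"
      using x by (simp add: nat_pow_mult \<psi>_pow mod_add_eq)
  qed
  moreover have "\<psi> x = 1" using \<psi>_pow[of 1] x n(1) by simp
  ultimately show ?thesis by blast
qed

lemma (in group) maximal_subgroup_containing: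
  assumes fin: "finite (carrier G)" and H: "subgroup H G" "H \<noteq> carrier G"
  obtains M where "subgroup M G" "H \<subseteq> M" "M \<noteq> carrier G"
    and "\<And>S. subgroup S G \<Longrightarrow> M \<subseteq> S \<Longrightarrow> S \<noteq> carrier G \<Longrightarrow> S = M"
proof -
  define P where "P S \<longleftrightarrow> subgroup S G \<and> H \<subseteq> S \<and> S \<noteq> carrier G" for S
  have "\<exists>M. P M \<and> (\<forall>S. P S \<longrightarrow> card S \<le> card M)"
  proof (rule ex_has_greatest_nat[of P H card "Suc (order G)"])
    show "P H" using H unfolding P_def by auto
    show "\<forall>S. P S \<longrightarrow> card S < Suc (order G)"
      unfolding P_def order_def using fin card_mono[OF fin subgroup.subset] by (simp add: le_imp_less_Suc)
  qed
  then obtain M where M: "P M" and card_max: "\<And>S. P S \<Longrightarrow> card S \<le> card M" by blast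
  have "S = M" if "subgroup S G" "M \<subseteq> S" "S \<noteq> carrier G" for S
  proof -
    have "card S \<le> card M" using that M card_max unfolding P_def by auto
    moreover have "finite S" using fin that(1) subgroup.subset finite_subset by blast
    ultimately show ?thesis using that(2) card_seteq by blast
  qed
  with M that show ?thesis unfolding P_def by blast
qed

lemma (in normal) FactGroup_cyclic_if_maximal:
  assumes fin: "finite (carrier G)" and x: "x \<in> carrier G" "x \<notin> H"
    and maximal: "\<And>S. subgroup S G \<Longrightarrow> H \<subseteq> S \<Longrightarrow> S \<noteq> carrier G \<Longrightarrow> S = H"
  shows "carrier (G Mod H) = {(H #> x) [^]\<^bsub>G Mod H\<^esub> (i::nat) | i. True}"
proof -
  interpret Q: group "G Mod H" by (rule factorgroup_is_group)
  have X: "H #> x \<in> carrier (G Mod H)"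
    unfolding FactGroup_def using x(1) by (simp add: rcosetsI[OF subgroup.subset[OF subgroup_axioms]])
  have fin_Q: "finite (carrier (G Mod H))"
    unfolding FactGroup_def using fin rcosets_subset_PowG[OF subgroup_axioms]
    by (simp add: finite_subset)
  have "subgroup (generate (G Mod H) {H #> x}) (G Mod H)" using Q.generate_is_subgroup X by simp
  note gen_X = factgroup_subgroup_union_subgroup[OF this] factgroup_subgroup_union_char[OF this]
  define S where "S = {g \<in> carrier G. H #> g \<in> generate (G Mod H) {H #> x}}"
  have "subgroup S G" using gen_X unfolding S_def by simp
  moreover have "H \<subseteq> S"
    using rcos_const[OF is_group] subgroup.subset[OF subgroup_axioms]
      generate.one[of "G Mod H" "{H #> x}"] unfolding S_def by auto
  moreover have "x \<in> S" using x generate.incl[of "H #> x" "{H #> x}" "G Mod H"] unfolding S_def by auto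
  ultimately have "S = carrier G" using maximal x(2) by blast
  then have "carrier (G Mod H) \<subseteq> generate (G Mod H) {H #> x}"
    unfolding S_def FactGroup_def RCOSETS_def by auto
  moreover have "generate (G Mod H) {H #> x} \<subseteq> carrier (G Mod H)" using Q.generate_incl X by simp
  ultimately have "carrier (G Mod H) = generate (G Mod H) {H #> x}" by (rule equalityI)
  also have "\<dots> = {(H #> x) [^]\<^bsub>G Mod H\<^esub> (i::nat) | i. True}"
    using Q.generate_pow_on_finite_carrier[OF fin_Q X] by simp
  finally show ?thesis .
qed

text \<open>Extend \<open>H\<close> to a maximal subgroup \<open>M\<close>; it is normal and \<open>G Mod M\<close> is cyclic of
  \<open>p\<close>-power order \<open>> 1\<close>.\<close>
lemma (in group) p_group_hom_Zmod_vanishing_on_subgroup: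
  assumes p: "prime p" and order: "order G = p ^ k"
    and H: "subgroup H G" "H \<noteq> carrier G"
  shows "\<exists>\<psi> \<in> hom G (Zmod p). (\<forall>h\<in>H. \<psi> h = 0) \<and> (\<exists>g\<in>carrier G. \<psi> g \<noteq> 0)"
proof -
  have fin: "finite (carrier G)"
    using order p order_gt_0_iff_finite prime_gt_0_nat by force
  obtain M where M: "subgroup M G" "H \<subseteq> M" "M \<noteq> carrier G"
    and maximal: "\<And>S. subgroup S G \<Longrightarrow> M \<subseteq> S \<Longrightarrow> S \<noteq> carrier G \<Longrightarrow> S = M"
    using maximal_subgroup_containing[OF fin H] by blast
  interpret M: normal M G
    by (rule maximal_subgroup_of_p_group_is_normal[OF p order M(1,3) maximal])
  define Q where "Q = G Mod M"
  interpret Q: group Q unfolding Q_def by (rule M.factorgroup_is_group)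
  obtain x where x: "x \<in> carrier G" "x \<notin> M" using M(3) M.subset by auto
  define X where "X = M #> x"
  have X: "X \<in> carrier Q"
    unfolding X_def Q_def FactGroup_def by (simp add: rcosetsI[OF M.subset x(1)])
  have cyclic: "carrier Q = {X [^]\<^bsub>Q\<^esub> (i::nat) | i. True}"
    unfolding Q_def X_def by (rule M.FactGroup_cyclic_if_maximal[OF fin x maximal])
  have "order Q * card M = p ^ k"
    using lagrange[OF M.subgroup_axioms] order unfolding order_def Q_def FactGroup_def by simp
  then have "Q.ord X dvd p ^ k"
    using dvd_trans[OF Q.ord_dvd_group_order[OF X] dvd_triv_left] by metis
  moreover have "X \<noteq> \<one>\<^bsub>Q\<^esub>"
    using x rcos_self[OF x(1) M.subgroup_axioms] unfolding X_def Q_def by auto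
  then have "Q.ord X \<noteq> 1" using Q.ord_eq_1[OF X] by simp
  ultimately have "p dvd Q.ord X" by (rule prime_dvd_if_dvd_prime_power[OF p])
  then obtain \<psi> where \<psi>: "\<psi> \<in> hom Q (Zmod p)" "\<psi> X = 1"
    using Q.cyclic_group_hom_Zmod[OF X cyclic prime_gt_1_nat[OF p]] by blast
  interpret \<psi>: group_hom Q "Zmod p" \<psi>
    using \<psi>(1) group_Zmod[OF prime_gt_0_nat[OF p]] Q.is_group
    by (simp add: group_hom_def group_hom_axioms_def)
  have "(\<lambda>g. M #> g) \<in> hom G Q" unfolding Q_def by (rule M.r_coset_hom_Mod)
  then have "(\<lambda>g. \<psi> (M #> g)) \<in> hom G (Zmod p)"
    using Group.hom_compose[OF _ \<psi>(1)] by (simp add: comp_def)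
  moreover have "\<psi> (M #> h) = 0" if "h \<in> H" for h
    using M.rcos_const[OF is_group] M(2) that \<psi>.hom_one unfolding Q_def by auto
  moreover have "\<psi> (M #> x) \<noteq> 0" using \<psi>(2) unfolding X_def by simp
  ultimately show ?thesis using x(1) by (intro bexI[of _ "\<lambda>g. \<psi> (M #> g)"]) auto
qed

section \<open>Profinite groups\<close>

lemma topgroup_carrier: "topgroup G T \<Longrightarrow> topspace T = carrier G"
  unfolding topgroup_def by simp

lemma continuous_map_topgroup_mult:
  assumes "topgroup G T" "continuous_map X T f" "continuous_map X T g"
  shows "continuous_map X T (\<lambda>z. f z \<otimes>\<^bsub>G\<^esub> g z)"
proof -
  have "continuous_map X (prod_topology T T) (\<lambda>z. (f z, g z))"
    using assms(2,3) by (simp add: continuous_map_paired)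
  moreover have "continuous_map (prod_topology T T) T (\<lambda>(x, y). x \<otimes>\<^bsub>G\<^esub> y)"
    using assms(1) unfolding topgroup_def by simp
  ultimately show ?thesis by (rule continuous_map_compose[THEN continuous_map_eq]) auto
qed

lemma continuous_map_topgroup_inv:
  assumes "topgroup G T" "continuous_map X T f"
  shows "continuous_map X T (\<lambda>z. inv\<^bsub>G\<^esub> f z)"
  using assms continuous_map_compose[OF assms(2), of T "\<lambda>x. inv\<^bsub>G\<^esub> x"]
  unfolding topgroup_def by (simp add: o_def)

lemma continuous_map_topgroup_translations:
  assumes "topgroup G T" "a \<in> carrier G"
  shows "continuous_map T T (\<lambda>y. a \<otimes>\<^bsub>G\<^esub> y)" "continuous_map T T (\<lambda>y. y \<otimes>\<^bsub>G\<^esub> a)"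
  using continuous_map_topgroup_mult[OF assms(1), of T "\<lambda>_. a" "\<lambda>y. y"]
    continuous_map_topgroup_mult[OF assms(1), of T "\<lambda>y. y" "\<lambda>_. a"]
    assms topgroup_carrier[OF assms(1)] by (simp_all add: continuous_map_id[unfolded id_def])

lemma continuous_map_discrete_topologyI:
  assumes "f \<in> topspace X \<rightarrow> U"
    and "\<And>x. x \<in> topspace X \<Longrightarrow> \<exists>W. openin X W \<and> x \<in> W \<and> (\<forall>y\<in>W. f y = f x)"
  shows "continuous_map X (discrete_topology U) f"
  unfolding continuous_map_def
proof (intro conjI allI impI)
  show "f \<in> topspace X \<rightarrow> topspace (discrete_topology U)" using assms(1) by simp
  fix V
  show "openin X {x \<in> topspace X. f x \<in> V}"
  proof (subst openin_subopen, intro ballI)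
    fix x assume x: "x \<in> {x \<in> topspace X. f x \<in> V}"
    then obtain W where W: "openin X W" "x \<in> W" and const: "\<forall>y\<in>W. f y = f x"
      using assms(2) by blast
    have "W \<subseteq> {x \<in> topspace X. f x \<in> V}"
    proof
      fix y assume "y \<in> W"
      with const have "f y = f x" by (rule bspec)
      with x \<open>y \<in> W\<close> openin_subset[OF W(1)] show "y \<in> {x \<in> topspace X. f x \<in> V}" by auto
    qed
    with W show "\<exists>W. openin X W \<and> x \<in> W \<and> W \<subseteq> {x \<in> topspace X. f x \<in> V}" by blast
  qed
qed

lemma openin_fibre_discrete_topology:
  assumes "continuous_map X (discrete_topology U) f" "x \<in> topspace X"
  shows "openin X {y \<in> topspace X. f y = f x}"
  using openin_continuous_map_preimage[OF assms(1), of "{f x}"] assms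
  by (simp add: continuous_map_def Pi_iff)

lemma (in group) open_subgroupI:
  assumes tg: "topgroup G T" and S: "subgroup S G"
    and V: "openin T V" "\<one> \<in> V" "V \<subseteq> S"
  shows "openin T S"
proof (subst openin_subopen, intro ballI)
  fix h assume h: "h \<in> S"
  then have hc: "h \<in> carrier G" using subgroup.subset[OF S] by auto
  define W where "W = {y \<in> topspace T. inv h \<otimes> y \<in> V}"
  have "openin T W" unfolding W_def using hc
    by (intro openin_continuous_map_preimage[OF continuous_map_topgroup_translations(1)[OF tg] V(1)]) simp
  moreover have "h \<in> W" unfolding W_def using hc V(2) topgroup_carrier[OF tg] by simp
  moreover have "W \<subseteq> S"
  proof
    fix y assume "y \<in> W"
    then have y: "y \<in> carrier G" "inv h \<otimes> y \<in> V"
      unfolding W_def using topgroup_carrier[OF tg] by auto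
    then have "h \<otimes> (inv h \<otimes> y) \<in> S" using h V(3) subgroup.m_closed[OF S] by auto
    then show "y \<in> S" using hc y by (simp add: m_assoc[symmetric])
  qed
  ultimately show "\<exists>W. openin T W \<and> h \<in> W \<and> W \<subseteq> S" by blast
qed

lemma clopen_nbhd_in_compact_totally_disconnected:
  assumes X: "compact_space X" "Hausdorff_space X"
    and components: "\<And>x. x \<in> topspace X \<Longrightarrow> connected_component_of_set X x = {x}"
    and W: "openin X W" "a \<in> W"
  obtains U where "openin X U" "closedin X U" "a \<in> U" "U \<subseteq> W"
proof -
  have "separated_between X {a} (topspace X - W)"
  proof (rule cut_wire_fence_theorem_gen)
    show "compactin X {a}" using W openin_subset by auto
    fix C assume C: "connectedin X C"
    show "disjnt C {a} \<or> disjnt C (topspace X - W)"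
    proof (cases "C = {}")
      case False
      then obtain c where c: "c \<in> C" by auto
      then have "c \<in> topspace X" using C connectedin_subset_topspace by blast
      then have "C = {c}"
        using connected_component_of_maximal[OF C c] components c by auto
      then show ?thesis using W(2) by (cases "c = a") (auto simp: disjnt_def)
    qed simp
  qed (use X W in auto)
  then obtain U V where UV: "openin X U" "openin X V" "U \<union> V = topspace X" "disjnt U V"
    "{a} \<subseteq> U" "topspace X - W \<subseteq> V"
    unfolding separated_between_def by blast
  then have "U = topspace X - V" by (auto simp: disjnt_def)
  then have "closedin X U" using UV(2) openin_closedin_eq by blast
  moreover have "U \<subseteq> W" using UV(4,6) openin_subset[OF UV(1)] by (auto simp: disjnt_def)
  ultimately show ?thesis using UV(1,5) by (intro that) auto
qed

lemma (in group) subgroup_right_stabilizer: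
  assumes U: "U \<subseteq> carrier G"
  shows "subgroup {g \<in> carrier G. \<forall>u\<in>U. u \<otimes> g \<in> U \<and> u \<otimes> inv g \<in> U} G"
    (is "subgroup ?H G")
proof (rule subgroupI)
  show "?H \<subseteq> carrier G" by auto
  have "\<one> \<in> ?H" using U by (auto simp: subset_iff)
  then show "?H \<noteq> {}" by blast
  show "inv a \<in> ?H" if "a \<in> ?H" for a using that by auto
  fix a b assume ab: "a \<in> ?H" "b \<in> ?H"
  then have "u \<otimes> a \<otimes> b \<in> U \<and> u \<otimes> inv b \<otimes> inv a \<in> U" if "u \<in> U" for u using that by auto
  with U ab show "a \<otimes> b \<in> ?H" by (auto simp: m_assoc inv_mult_group subset_iff)
qed

lemma (in group) normal_core:
  assumes H: "subgroup H G"
  shows "{h \<in> carrier G. \<forall>g\<in>carrier G. g \<otimes> h \<otimes> inv g \<in> H} \<lhd> G"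
    (is "?N \<lhd> G")
proof -
  interpret H: subgroup H G by (rule H)
  have "subgroup ?N G"
  proof (rule subgroupI)
    show "?N \<subseteq> carrier G" "?N \<noteq> {}" by auto
    fix a b assume ab: "a \<in> ?N" "b \<in> ?N"
    then have abc: "a \<in> carrier G" "b \<in> carrier G" by auto
    have "g \<otimes> inv a \<otimes> inv g = inv (g \<otimes> a \<otimes> inv g)" if "g \<in> carrier G" for g
      using that abc by (simp add: inv_mult_group m_assoc)
    then show "inv a \<in> ?N" using ab abc by auto
    have "g \<otimes> (a \<otimes> b) \<otimes> inv g = (g \<otimes> a \<otimes> inv g) \<otimes> (g \<otimes> b \<otimes> inv g)" if "g \<in> carrier G" for g
      using that abc by (simp add: m_assoc inv_solve_left)
    then show "a \<otimes> b \<in> ?N" using ab abc by auto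
  qed
  moreover have "x \<otimes> h \<otimes> inv x \<in> ?N" if "x \<in> carrier G" "h \<in> ?N" for x h
  proof -
    have "g \<otimes> (x \<otimes> h \<otimes> inv x) \<otimes> inv g = (g \<otimes> x) \<otimes> h \<otimes> inv (g \<otimes> x)" if "g \<in> carrier G" for g
      using that \<open>x \<in> carrier G\<close> \<open>h \<in> ?N\<close> by (simp add: m_assoc inv_mult_group)
    then show ?thesis using that by auto
  qed
  ultimately show ?thesis by (simp add: normal_inv_iff)
qed

text \<open>By the tube lemma for the compact set \<open>U\<close>, the right stabilizer of \<open>U\<close> contains a
  neighbourhood of \<open>\<one>\<close>.\<close>
lemma (in group) open_subgroup_in_compact_open:
  assumes tg: "topgroup G T" and U: "openin T U" "compactin T U" "\<one> \<in> U"
  obtains H where "subgroup H G" "openin T H" "H \<subseteq> U"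
proof -
  have top: "topspace T = carrier G" by (rule topgroup_carrier[OF tg])
  have Uc: "U \<subseteq> carrier G" using openin_subset[OF U(1)] top by simp
  define W where "W = {z \<in> topspace (prod_topology T T). (\<lambda>(x, y). x \<otimes> y) z \<in> U}"
  have "openin (prod_topology T T) W"
    unfolding W_def using tg U(1) unfolding topgroup_def by (intro openin_continuous_map_preimage) auto
  moreover have "U \<times> {\<one>} \<subseteq> W" unfolding W_def using Uc top by auto
  ultimately have "\<exists>U1 V1. openin T U1 \<and> openin T V1 \<and> U \<subseteq> U1 \<and> \<one> \<in> V1 \<and> U1 \<times> V1 \<subseteq> W"
    using top by (intro tube_lemma_left[OF _ U(2)]) auto
  then obtain U1 V1 where V1: "openin T V1" "\<one> \<in> V1" and UV1: "U \<subseteq> U1" "U1 \<times> V1 \<subseteq> W"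
    by blast
  have U_V1: "u \<otimes> v \<in> U" if "u \<in> U" "v \<in> V1" for u v
  proof -
    have "(u, v) \<in> U1 \<times> V1" using that UV1(1) by auto
    then show ?thesis using UV1(2) unfolding W_def by auto
  qed
  define V2 where "V2 = V1 \<inter> {v \<in> topspace T. inv v \<in> V1}"
  have "openin T V2"
    unfolding V2_def using V1(1) tg unfolding topgroup_def
    by (intro openin_Int openin_continuous_map_preimage) auto
  define H where "H = {g \<in> carrier G. \<forall>u\<in>U. u \<otimes> g \<in> U \<and> u \<otimes> inv g \<in> U}"
  have "subgroup H G" unfolding H_def by (rule subgroup_right_stabilizer[OF Uc])
  moreover have "V2 \<subseteq> H" unfolding V2_def H_def using U_V1 top by auto
  moreover have "\<one> \<in> V2" unfolding V2_def using V1(2) top by auto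
  ultimately have "openin T H" using open_subgroupI[OF tg] \<open>openin T V2\<close> by blast
  moreover have "H \<subseteq> U" unfolding H_def using U(3) by auto
  ultimately show ?thesis using \<open>subgroup H G\<close> that by blast
qed

text \<open>By compactness of the whole group (tube lemma for the conjugation map), the normal core
  of an open subgroup contains a neighbourhood of \<open>\<one>\<close>.\<close>
lemma (in group) open_normal_subgroup_in_open_subgroup:
  assumes tg: "topgroup G T" and cpt: "compact_space T"
    and H: "subgroup H G" "openin T H"
  obtains N where "N \<lhd> G" "openin T N" "N \<subseteq> H"
proof -
  have top: "topspace T = carrier G" by (rule topgroup_carrier[OF tg])
  define c where "c z = fst z \<otimes> snd z \<otimes> inv (fst z)" for z
  have "continuous_map (prod_topology T T) T c"
    unfolding c_def by (intro continuous_map_topgroup_mult[OF tg] continuous_map_topgroup_inv[OF tg]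
        continuous_map_fst continuous_map_snd)
  then have "openin (prod_topology T T) {z \<in> topspace (prod_topology T T). c z \<in> H}"
    using H(2) by (rule openin_continuous_map_preimage)
  moreover have "topspace T \<times> {\<one>} \<subseteq> {z \<in> topspace (prod_topology T T). c z \<in> H}"
    unfolding c_def using top subgroup.one_closed[OF H(1)] by auto
  ultimately have "\<exists>U V. openin T U \<and> openin T V \<and> topspace T \<subseteq> U \<and> \<one> \<in> V \<and>
      U \<times> V \<subseteq> {z \<in> topspace (prod_topology T T). c z \<in> H}"
    using top by (intro tube_lemma_left[OF _ cpt[unfolded compact_space_def]]) auto
  then obtain U V where V: "openin T V" "\<one> \<in> V"
    and UV: "topspace T \<subseteq> U" "U \<times> V \<subseteq> {z \<in> topspace (prod_topology T T). c z \<in> H}"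
    by blast
  define N where "N = {h \<in> carrier G. \<forall>g\<in>carrier G. g \<otimes> h \<otimes> inv g \<in> H}"
  have "N \<lhd> G" unfolding N_def by (rule normal_core[OF H(1)])
  have "g \<otimes> h \<otimes> inv g \<in> H" if "g \<in> carrier G" "h \<in> V" for g h
  proof -
    have "(g, h) \<in> U \<times> V" using that UV(1) top by auto
    then show ?thesis using UV(2) unfolding c_def by auto
  qed
  then have "V \<subseteq> N" unfolding N_def using openin_subset[OF V(1)] top by auto
  then have "openin T N"
    using open_subgroupI[OF tg normal.axioms(1)[OF \<open>N \<lhd> G\<close>] V(1,2)] by blast
  have "N \<subseteq> H"
  proof
    fix h assume "h \<in> N"
    then have "h \<in> carrier G" "\<forall>g\<in>carrier G. g \<otimes> h \<otimes> inv g \<in> H" unfolding N_def by auto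
    then have "\<one> \<otimes> h \<otimes> inv \<one> \<in> H" "h \<in> carrier G" using one_closed by blast+
    then show "h \<in> H" by simp
  qed
  with \<open>N \<lhd> G\<close> \<open>openin T N\<close> show ?thesis by (rule that)
qed

lemma (in group) profinite_open_normal_subgroup_in_nbhd:
  assumes pf: "profinite_group G T" and W: "openin T W" "\<one> \<in> W"
  obtains N where "N \<lhd> G" "openin T N" "N \<subseteq> W"
proof -
  have tg: "topgroup G T" and cpt: "compact_space T"
    using pf unfolding profinite_group_def by auto
  have T2: "Hausdorff_space T"
    and components: "\<And>x. x \<in> topspace T \<Longrightarrow> connected_component_of_set T x = {x}"
    using pf unfolding profinite_group_def by auto
  obtain U where U: "openin T U" "closedin T U" "\<one> \<in> U" "U \<subseteq> W"
    by (rule clopen_nbhd_in_compact_totally_disconnected[OF cpt T2 components W])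
  obtain H where H: "subgroup H G" "openin T H" "H \<subseteq> U"
    by (rule open_subgroup_in_compact_open[OF tg U(1) closedin_compact_space[OF cpt U(2)] U(3)])
  obtain N where N: "N \<lhd> G" "openin T N" "N \<subseteq> H"
    by (rule open_normal_subgroup_in_open_subgroup[OF tg cpt H(1,2)])
  show ?thesis using N H(3) U(4) by (intro that[of N]) auto
qed

lemma (in group) profinite_open_normal_subgroup_avoiding_closure:
  assumes pf: "profinite_group G T" and x: "x \<in> carrier G" "x \<notin> T closure_of K"
  obtains N where "N \<lhd> G" "openin T N" "\<forall>n\<in>N. n \<otimes> x \<notin> T closure_of K"
proof -
  have tg: "topgroup G T" using pf unfolding profinite_group_def by simp
  define W where "W = {y \<in> topspace T. y \<otimes> x \<in> topspace T - T closure_of K}"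
  have "openin T W" unfolding W_def
    by (intro openin_continuous_map_preimage[OF continuous_map_topgroup_translations(2)[OF tg x(1)]]
        openin_diff[OF openin_topspace closedin_closure_of])
  moreover have "\<one> \<in> W" unfolding W_def using x topgroup_carrier[OF tg] by simp
  ultimately obtain N where N: "N \<lhd> G" "openin T N" "N \<subseteq> W"
    by (rule profinite_open_normal_subgroup_in_nbhd[OF pf])
  have "\<forall>n\<in>N. n \<otimes> x \<notin> T closure_of K" using N(3) unfolding W_def by auto
  with N(1,2) show ?thesis by (rule that)
qed

section \<open>Continuous characters of pro-p groups\<close>

abbreviation cont_char :: "('a, 'b) monoid_scheme \<Rightarrow> 'a topology \<Rightarrow> nat \<Rightarrow> ('a \<Rightarrow> nat) \<Rightarrow> bool" where
  "cont_char G T n \<psi> \<equiv> cont_hom G T (Zmod n) (discrete_topology {..<n}) \<psi>"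

lemma (in group) cont_hom_through_open_quotient:
  assumes tg: "topgroup G T" and N: "N \<lhd> G" "openin T N" and \<psi>: "\<psi> \<in> hom (G Mod N) H"
  shows "cont_hom G T H (discrete_topology (carrier H)) (\<lambda>g. \<psi> (N #> g))"
proof -
  interpret N: normal N G by (rule N(1))
  have top: "topspace T = carrier G" by (rule topgroup_carrier[OF tg])
  have "(\<lambda>g. N #> g) \<in> hom G (G Mod N)" by (rule N.r_coset_hom_Mod)
  then have hom: "(\<lambda>g. \<psi> (N #> g)) \<in> hom G H"
    using Group.hom_compose[OF _ \<psi>] by (simp add: comp_def)
  have "continuous_map T (discrete_topology (carrier H)) (\<lambda>g. \<psi> (N #> g))"
  proof (rule continuous_map_discrete_topologyI)
    show "(\<lambda>g. \<psi> (N #> g)) \<in> topspace T \<rightarrow> carrier H" using hom top unfolding hom_def by auto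
    fix g assume "g \<in> topspace T"
    then have g: "g \<in> carrier G" using top by simp
    define W where "W = {y \<in> topspace T. y \<otimes> inv g \<in> N}"
    have "openin T W" unfolding W_def using g
      by (intro openin_continuous_map_preimage[OF continuous_map_topgroup_translations(2)[OF tg] N(2)]) simp
    moreover have "g \<in> W" unfolding W_def using g top by simp
    moreover have "\<forall>y\<in>W. \<psi> (N #> y) = \<psi> (N #> g)"
    proof
      fix y assume "y \<in> W"
      then have "y \<in> carrier G" "y \<otimes> inv g \<in> N" using top unfolding W_def by auto
      then have "y \<in> N #> g" using N.rcos_module_rev[OF is_group g] by blast
      then have "N #> y = N #> g" using repr_independence[OF _ g N.subgroup_axioms] by simp
      then show "\<psi> (N #> y) = \<psi> (N #> g)" by (rule arg_cong)
    qed
    ultimately show "\<exists>W. openin T W \<and> g \<in> W \<and> (\<forall>y\<in>W. \<psi> (N #> y) = \<psi> (N #> g))"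
      by (intro exI[of _ W] conjI)
  qed
  with hom show ?thesis unfolding cont_hom_def by simp
qed

text \<open>Pick \<open>x\<close> outside the closure of \<open>K\<close>; an open normal subgroup \<open>N\<close> with \<open>N x\<close> disjoint
  from \<open>K\<close> makes the image of \<open>K\<close> a proper subgroup of the finite \<open>p\<close>-group \<open>G Mod N\<close>.\<close>
lemma (in group) pro_p_group_cont_char_vanishing_on_subgroup:
  assumes pp: "pro_p_group p G T" and K: "subgroup K G" and not_dense: "T closure_of K \<noteq> carrier G"
  obtains \<psi> where "cont_char G T p \<psi>" "\<forall>k\<in>K. \<psi> k = 0" "\<exists>g\<in>carrier G. \<psi> g \<noteq> 0"
proof -
  have p: "prime p" and pf: "profinite_group G T"
    and index: "\<And>N. N \<lhd> G \<Longrightarrow> openin T N \<Longrightarrow> \<exists>k. card (rcosets N) = p ^ k"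
    using pp unfolding pro_p_group_def by auto
  have tg: "topgroup G T" using pf unfolding profinite_group_def by simp
  have top: "topspace T = carrier G" by (rule topgroup_carrier[OF tg])
  obtain x where x: "x \<in> carrier G" "x \<notin> T closure_of K"
    using not_dense closure_of_subset_topspace[of T K] top by blast
  obtain N where N: "N \<lhd> G" "openin T N" "\<forall>n\<in>N. n \<otimes> x \<notin> T closure_of K"
    by (rule profinite_open_normal_subgroup_avoiding_closure[OF pf x])
  interpret N: normal N G by (rule N(1))
  define Q where "Q = G Mod N"
  interpret Q: group Q unfolding Q_def by (rule N.factorgroup_is_group)
  have carrier_Q: "carrier Q = rcosets N" unfolding Q_def FactGroup_def by simp
  have proj: "group_hom G Q (\<lambda>g. N #> g)"
    using N.r_coset_hom_Mod Q.is_group is_group unfolding Q_def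
    by (simp add: group_hom_def group_hom_axioms_def)
  define KQ where "KQ = (\<lambda>g. N #> g) ` K"
  have "subgroup KQ Q" unfolding KQ_def by (rule group_hom.subgroup_img_is_subgroup[OF proj K])
  moreover have "N #> x \<notin> KQ"
  proof
    assume "N #> x \<in> KQ"
    then obtain k where k: "k \<in> K" "N #> x = N #> k" unfolding KQ_def by auto
    then have "k \<in> carrier G" using subgroup.subset[OF K] by auto
    then have "k \<in> N #> x" using k(2) rcos_self[OF _ N.subgroup_axioms] by simp
    then obtain n where "n \<in> N" "k = n \<otimes> x" unfolding r_coset_def by auto
    then have "k \<notin> T closure_of K" using N(3) by auto
    then show False using k(1) closure_of_subset[of K T] subgroup.subset[OF K] top by auto
  qed
  moreover have "N #> x \<in> carrier Q" using x carrier_Q N.subset by (simp add: rcosetsI)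
  moreover obtain k where "order Q = p ^ k" using index[OF N(1,2)] carrier_Q by (auto simp: order_def)
  ultimately obtain \<psi> where \<psi>: "\<psi> \<in> hom Q (Zmod p)" "\<forall>h\<in>KQ. \<psi> h = 0" "\<exists>Y\<in>carrier Q. \<psi> Y \<noteq> 0"
    using Q.p_group_hom_Zmod_vanishing_on_subgroup[OF p] by blast
  have "cont_char G T p (\<lambda>g. \<psi> (N #> g))"
    using cont_hom_through_open_quotient[OF tg N(1,2) \<psi>(1)[unfolded Q_def]] by simp
  moreover have "\<forall>k\<in>K. \<psi> (N #> k) = 0" using \<psi>(2) unfolding KQ_def by simp
  moreover have "\<exists>g\<in>carrier G. \<psi> (N #> g) \<noteq> 0"
    using \<psi>(3) unfolding carrier_Q RCOSETS_def by auto
  ultimately show ?thesis by (rule that)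
qed

lemma (in group) cont_homs_eq_on_top_generated:
  assumes tg: "topgroup G T" and H: "group H" "Hausdorff_space S"
    and f: "cont_hom G T H S f" and f': "cont_hom G T H S f'"
    and Y: "top_generates G T Y" and eq: "\<And>y. y \<in> Y \<Longrightarrow> f y = f' y"
    and g: "g \<in> carrier G"
  shows "f g = f' g"
proof -
  have top: "topspace T = carrier G" by (rule topgroup_carrier[OF tg])
  interpret f: group_hom G H f using f H(1) is_group
    unfolding cont_hom_def by (simp add: group_hom_def group_hom_axioms_def)
  interpret f': group_hom G H f' using f' H(1) is_group
    unfolding cont_hom_def by (simp add: group_hom_def group_hom_axioms_def)
  define E where "E = {x \<in> topspace T. f x = f' x}"
  have "closedin T E"
    unfolding E_def using f f' H(2) by (intro closedin_continuous_maps_eq) (auto simp: cont_hom_def)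
  have "subgroup E G"
    by (rule subgroupI) (auto simp: E_def top)
  moreover have "Y \<subseteq> E" using Y eq unfolding top_generates_def E_def top by auto
  ultimately have "generate G Y \<subseteq> E" by (rule generate_subgroup_incl[rotated])
  then have "T closure_of generate G Y \<subseteq> E" using closure_of_minimal[OF _ \<open>closedin T E\<close>] by blast
  then show ?thesis using Y g unfolding top_generates_def E_def by auto
qed

lemma cont_char_zero: "topspace T = carrier G \<Longrightarrow> 0 < n \<Longrightarrow> cont_char G T n (\<lambda>_. 0)"
  unfolding cont_hom_def by (auto intro!: homI)

lemma (in group) cont_char_linear_combination:
  assumes tg: "topgroup G T" and n: "0 < n" and V: "finite V"
    and \<psi>: "\<And>v. v \<in> V \<Longrightarrow> cont_char G T n (\<psi> v)"
  shows "cont_char G T n (\<lambda>g. (\<Sum>v\<in>V. c v * \<psi> v g) mod n)"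
proof -
  have top: "topspace T = carrier G" by (rule topgroup_carrier[OF tg])
  have \<psi>_mult: "\<psi> v (a \<otimes> b) = (\<psi> v a + \<psi> v b) mod n"
    if "v \<in> V" "a \<in> carrier G" "b \<in> carrier G" for v a b
    using \<psi>[OF that(1)] that(2,3) unfolding cont_hom_def hom_def by auto
  have "(\<lambda>g. (\<Sum>v\<in>V. c v * \<psi> v g) mod n) \<in> hom G (Zmod n)"
  proof (rule homI)
    show "(\<Sum>v\<in>V. c v * \<psi> v a) mod n \<in> carrier (Zmod n)" for a using n by simp
    fix a b assume ab: "a \<in> carrier G" "b \<in> carrier G"
    have "(\<Sum>v\<in>V. c v * \<psi> v (a \<otimes> b)) mod n = (\<Sum>v\<in>V. c v * ((\<psi> v a + \<psi> v b) mod n)) mod n"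
      using \<psi>_mult ab by (intro arg_cong[where f="\<lambda>x. x mod n"] sum.cong) auto
    also have "\<dots> = (\<Sum>v\<in>V. (c v * ((\<psi> v a + \<psi> v b) mod n)) mod n) mod n"
      by (simp add: mod_sum_eq)
    also have "\<dots> = (\<Sum>v\<in>V. c v * (\<psi> v a + \<psi> v b)) mod n"
      by (simp add: mod_mult_right_eq mod_sum_eq)
    also have "\<dots> = ((\<Sum>v\<in>V. c v * \<psi> v a) mod n + (\<Sum>v\<in>V. c v * \<psi> v b) mod n) mod n"
      by (simp add: distrib_left sum.distrib mod_add_eq)
    finally show "(\<Sum>v\<in>V. c v * \<psi> v (a \<otimes> b)) mod n =
        ((\<Sum>v\<in>V. c v * \<psi> v a) mod n) \<otimes>\<^bsub>Zmod n\<^esub> ((\<Sum>v\<in>V. c v * \<psi> v b) mod n)"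
      by (simp only: Zmod_simps)
  qed
  moreover have "continuous_map T (discrete_topology {..<n}) (\<lambda>g. (\<Sum>v\<in>V. c v * \<psi> v g) mod n)"
  proof (rule continuous_map_discrete_topologyI)
    show "(\<lambda>g. (\<Sum>v\<in>V. c v * \<psi> v g) mod n) \<in> topspace T \<rightarrow> {..<n}" using n by simp
    fix x assume x: "x \<in> topspace T"
    define W where "W = (\<Inter>v\<in>V. {y \<in> topspace T. \<psi> v y = \<psi> v x}) \<inter> topspace T"
    have "openin T W"
      unfolding W_def using V \<psi> x
      by (intro openin_INT openin_fibre_discrete_topology) (auto simp: cont_hom_def)
    moreover have "x \<in> W" unfolding W_def using x by simp
    moreover have "\<forall>y\<in>W. (\<Sum>v\<in>V. c v * \<psi> v y) mod n = (\<Sum>v\<in>V. c v * \<psi> v x) mod n"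
      unfolding W_def by (auto intro!: arg_cong[where f="\<lambda>s. s mod n"] sum.cong)
    ultimately show "\<exists>W. openin T W \<and> x \<in> W \<and>
        (\<forall>y\<in>W. (\<Sum>v\<in>V. c v * \<psi> v y) mod n = (\<Sum>v\<in>V. c v * \<psi> v x) mod n)"
      by (intro exI[of _ W] conjI)
  qed
  ultimately show ?thesis unfolding cont_hom_def by simp
qed

text \<open>The \<open>p ^ card V\<close> characters \<open>\<Sum>\<^sub>v c\<^sub>v \<psi>\<^sub>v\<close> with \<open>c \<in> {..<p}\<^sup>V\<close> are pairwise distinct
  (evaluate at the \<open>a\<^sub>v\<close>), and each is determined by its values on \<open>Y\<close>.\<close>
lemma (in group) card_le_card_top_generators:
  assumes tg: "topgroup G T" and p: "prime p" and V: "finite V"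
    and \<psi>: "\<And>v. v \<in> V \<Longrightarrow> cont_char G T p (\<psi> v)"
    and a: "\<And>v. v \<in> V \<Longrightarrow> a v \<in> carrier G"
    and dual: "\<And>u v. u \<in> V \<Longrightarrow> v \<in> V \<Longrightarrow> u \<noteq> v \<Longrightarrow> \<psi> u (a v) = 0"
    and nonzero: "\<And>v. v \<in> V \<Longrightarrow> \<psi> v (a v) \<noteq> 0"
    and Y: "finite Y" "top_generates G T Y"
  shows "card V \<le> card Y"
proof -
  have p0: "0 < p" using p prime_gt_0_nat by blast
  define F where "F c g = (\<Sum>v\<in>V. c v * \<psi> v g) mod p" for c g
  have F_char: "cont_char G T p (F c)" for c
    unfolding F_def by (rule cont_char_linear_combination[OF tg p0 V \<psi>])
  have F_a: "F c (a u) = (c u * \<psi> u (a u)) mod p" if u: "u \<in> V" for c u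
  proof -
    have "(\<Sum>v\<in>V - {u}. c v * \<psi> v (a u)) = 0" using dual u by (intro sum.neutral) auto
    then show ?thesis unfolding F_def using sum.remove[OF V u, of "\<lambda>v. c v * \<psi> v (a u)"] by simp
  qed
  have "inj_on (\<lambda>c. restrict (F c) Y) (PiE V (\<lambda>_. {..<p}))"
  proof (rule inj_onI)
    fix c c' assume c: "c \<in> PiE V (\<lambda>_. {..<p})" and c': "c' \<in> PiE V (\<lambda>_. {..<p})"
      and eq: "restrict (F c) Y = restrict (F c') Y"
    have F_eq: "F c g = F c' g" if "g \<in> carrier G" for g
    proof (rule cont_homs_eq_on_top_generated[OF tg group_Zmod[OF p0] _ F_char F_char Y(2) _ that])
      show "F c y = F c' y" if "y \<in> Y" for y using fun_cong[OF eq, of y] that by simp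
    qed simp
    show "c = c'"
    proof (rule PiE_ext[OF c c'])
      fix u assume u: "u \<in> V"
      have "\<psi> u (a u) < p" using \<psi>[OF u] a[OF u] unfolding cont_hom_def hom_def by auto
      then have "coprime (\<psi> u (a u)) p"
        using nonzero[OF u] prime_imp_coprime[OF p] by (metis coprime_commute nat_dvd_not_less neq0_conv)
      moreover have "[c u * \<psi> u (a u) = c' u * \<psi> u (a u)] (mod p)"
        using F_eq[OF a[OF u]] F_a[OF u] by (simp add: cong_def)
      ultimately have "[c u = c' u] (mod p)" by (simp add: cong_mult_rcancel_nat)
      then show "c u = c' u" using c c' u by (auto intro: cong_less_modulus_unique_nat)
    qed
  qed
  moreover have "(\<lambda>c. restrict (F c) Y) ` PiE V (\<lambda>_. {..<p}) \<subseteq> PiE Y (\<lambda>_. {..<p})"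
    unfolding F_def using p0 by auto
  ultimately have "card (PiE V (\<lambda>_. {..<p})) \<le> card (PiE Y (\<lambda>_. {..<p}))"
    using Y(1) by (intro card_inj_on_le) (auto simp: finite_PiE)
  then have "p ^ card V \<le> p ^ card Y" using V Y(1) by (simp add: card_PiE)
  then show ?thesis using power_le_imp_le_exp prime_gt_1_nat[OF p] by blast
qed

text \<open>Minimality puts the closed subgroup generated by the other members into the kernel of a
  character, which cannot also vanish on \<open>A v\<close>.\<close>
lemma (in group) cont_char_separating_minimal_top_generating_family:
  assumes pp: "pro_p_group p G T"
    and A: "\<And>v. v \<in> V \<Longrightarrow> A v \<subseteq> carrier G"
    and gen: "top_generates G T (\<Union>v\<in>V. A v)"
    and minimal: "\<not> top_generates G T (\<Union>u\<in>V - {v}. A u)"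
  obtains \<psi> a where "cont_char G T p \<psi>" "\<forall>u\<in>V - {v}. \<forall>x\<in>A u. \<psi> x = 0" "a \<in> A v" "\<psi> a \<noteq> 0"
proof -
  have p0: "0 < p" and tg: "topgroup G T"
    using pp unfolding pro_p_group_def profinite_group_def by (auto simp: prime_gt_0_nat)
  define K where "K = generate G (\<Union>u\<in>V - {v}. A u)"
  have sub: "(\<Union>u\<in>V - {v}. A u) \<subseteq> carrier G" using A by auto
  then have K: "subgroup K G" unfolding K_def by (rule generate_is_subgroup)
  have not_dense: "T closure_of K \<noteq> carrier G"
    using minimal sub unfolding K_def top_generates_def by simp
  obtain \<psi> where \<psi>: "cont_char G T p \<psi>" "\<forall>k\<in>K. \<psi> k = 0" "\<exists>g\<in>carrier G. \<psi> g \<noteq> 0"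
    by (rule pro_p_group_cont_char_vanishing_on_subgroup[OF pp K not_dense])
  have vanish: "\<forall>u\<in>V - {v}. \<forall>x\<in>A u. \<psi> x = 0"
    using \<psi>(2) generate.incl[of _ "\<Union>u\<in>V - {v}. A u" G] unfolding K_def by blast
  have "\<exists>a\<in>A v. \<psi> a \<noteq> 0"
  proof (rule ccontr)
    assume "\<not> (\<exists>a\<in>A v. \<psi> a \<noteq> 0)"
    with vanish have "\<psi> y = 0" if "y \<in> (\<Union>u\<in>V. A u)" for y
      using that by (cases "y \<in> A v") auto
    then have "\<psi> g = 0" if "g \<in> carrier G" for g
      using cont_homs_eq_on_top_generated[OF tg group_Zmod[OF p0] _ \<psi>(1)
          cont_char_zero[OF topgroup_carrier[OF tg] p0] gen _ that] by simp
    then show False using \<psi>(3) by auto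
  qed
  then obtain a where "a \<in> A v" "\<psi> a \<noteq> 0" by blast
  with \<psi>(1) vanish show ?thesis by (rule that)
qed

lemma (in group) card_le_dgen_if_minimal_top_generating_family:
  assumes pp: "pro_p_group p G T" and V: "finite V"
    and A: "\<And>v. v \<in> V \<Longrightarrow> A v \<subseteq> carrier G"
    and gen: "top_generates G T (\<Union>v\<in>V. A v)"
    and minimal: "\<And>v. v \<in> V \<Longrightarrow> \<not> top_generates G T (\<Union>u\<in>V - {v}. A u)"
  shows "enat (card V) \<le> dgen G T"
proof -
  have p: "prime p" and tg: "topgroup G T"
    using pp unfolding pro_p_group_def profinite_group_def by auto
  have "\<exists>\<psi> a. cont_char G T p \<psi> \<and> (\<forall>u\<in>V - {v}. \<forall>x\<in>A u. \<psi> x = 0) \<and> a \<in> A v \<and> \<psi> a \<noteq> 0"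
    if v: "v \<in> V" for v
  proof -
    obtain \<psi> a where "cont_char G T p \<psi>" "\<forall>u\<in>V - {v}. \<forall>x\<in>A u. \<psi> x = 0" "a \<in> A v" "\<psi> a \<noteq> 0"
      by (rule cont_char_separating_minimal_top_generating_family[OF pp A gen minimal[OF v]])
    then show ?thesis by (intro exI conjI)
  qed
  then obtain \<psi> a where \<psi>: "\<And>v. v \<in> V \<Longrightarrow> cont_char G T p (\<psi> v)"
    and vanish: "\<And>u v x. v \<in> V \<Longrightarrow> u \<in> V - {v} \<Longrightarrow> x \<in> A u \<Longrightarrow> \<psi> v x = 0"
    and a: "\<And>v. v \<in> V \<Longrightarrow> a v \<in> A v" "\<And>v. v \<in> V \<Longrightarrow> \<psi> v (a v) \<noteq> 0"
    by metis
  show ?thesis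
    unfolding dgen_def
  proof (rule Inf_greatest)
    fix n assume "n \<in> {enat (card Y) | Y. finite Y \<and> top_generates G T Y}"
    then obtain Y where Y: "n = enat (card Y)" "finite Y" "top_generates G T Y" by blast
    have "card V \<le> card Y"
    proof (rule card_le_card_top_generators[OF tg p V \<psi> _ _ a(2) Y(2,3)])
      show "a v \<in> carrier G" if "v \<in> V" for v using a(1) A that by blast
      show "\<psi> u (a v) = 0" if "u \<in> V" "v \<in> V" "u \<noteq> v" for u v
        using vanish[of u v "a v"] a(1) that by blast
    qed
    then show "enat (card V) \<le> n" using Y(1) by simp
  qed
qed

lemma pro_p_group_cont_char_vanishing_on_image:
  assumes pE: "pro_p_group p E ET" and pP: "pro_p_group p P PT"
    and b: "cont_hom E ET P PT b" and proper: "b ` carrier E \<noteq> carrier P"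
  obtains \<psi> where "cont_char P PT p \<psi>" "\<forall>g\<in>carrier E. \<psi> (b g) = 0" "\<exists>a\<in>carrier P. \<psi> a \<noteq> 0"
proof -
  have E: "group E" "compact_space ET" "topspace ET = carrier E"
    and P: "group P" "Hausdorff_space PT"
    using pE pP unfolding pro_p_group_def profinite_group_def topgroup_def by auto
  interpret b: group_hom E P b
    using E(1) P(1) b unfolding cont_hom_def by (simp add: group_hom_def group_hom_axioms_def)
  have "compactin PT (b ` carrier E)"
    using image_compactin[OF E(2)[unfolded compact_space_def]] b E(3) unfolding cont_hom_def by metis
  then have "PT closure_of (b ` carrier E) = b ` carrier E"
    using compactin_imp_closedin[OF P(2)] closure_of_closedin by blast
  with proper obtain \<psi> where "cont_char P PT p \<psi>" "\<forall>k\<in>b ` carrier E. \<psi> k = 0" "\<exists>a\<in>carrier P. \<psi> a \<noteq> 0"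
    using group.pro_p_group_cont_char_vanishing_on_subgroup[OF P(1) pP b.img_is_subgroup] by metis
  then show ?thesis using that by blast
qed

section \<open>Trees of pro-p groups\<close>

lemma pending_vertex_unique_edge:
  assumes tree: "finite_tree Vs Es d0 d1" and v: "pending_vertex Vs Es d0 d1 v"
  obtains e where "e \<in> Es" "d0 e = v \<or> d1 e = v" "d0 e \<noteq> d1 e"
    and "\<forall>e'\<in>Es. d0 e' = v \<or> d1 e' = v \<longrightarrow> e' = e"
proof -
  obtain e where e: "{e \<in> Es. d0 e = v \<or> d1 e = v} = {e}"
    using v card_1_singletonE unfolding pending_vertex_def by blast
  have "d0 e \<noteq> d1 e"
  proof
    assume loop: "d0 e = d1 e"
    have "has_circuit Vs Es d0 d1" unfolding has_circuit_def
      using e loop by (intro exI[of _ "[e]"] exI[of _ "[d0 e, d0 e]"]) auto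
    then show False using tree unfolding finite_tree_def by blast
  qed
  with e that show ?thesis by blast
qed

lemma vertex_cont_char_vanishing_on_edge_group:
  assumes tree: "tree_of_pro_p_groups p Vs Es d0 d1 VG VT EG ET b0 b1"
    and reduced: "reduced_tree Es d0 d1 VG EG b0 b1"
    and e: "e \<in> Es" "d0 e \<noteq> d1 e" and v: "d0 e = v \<or> d1 e = v"
  obtains c where "cont_char (VG v) (VT v) p c" "\<exists>a\<in>carrier (VG v). c a \<noteq> 0"
    and "d0 e = v \<longrightarrow> (\<forall>g\<in>carrier (EG e). c (b0 e g) = 0)"
    and "d1 e = v \<longrightarrow> (\<forall>g\<in>carrier (EG e). c (b1 e g) = 0)"
proof -
  have pro_p: "pro_p_group p (EG e) (ET e)" "pro_p_group p (VG (d0 e)) (VT (d0 e))"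
      "pro_p_group p (VG (d1 e)) (VT (d1 e))"
    and b: "cont_hom (EG e) (ET e) (VG (d0 e)) (VT (d0 e)) (b0 e)"
      "cont_hom (EG e) (ET e) (VG (d1 e)) (VT (d1 e)) (b1 e)"
    using tree e(1) unfolding tree_of_pro_p_groups_def finite_tree_def cont_mono_def by auto
  have proper: "b0 e ` carrier (EG e) \<noteq> carrier (VG (d0 e))" "b1 e ` carrier (EG e) \<noteq> carrier (VG (d1 e))"
    using reduced e(1) unfolding reduced_tree_def by auto
  show ?thesis
  proof (cases "d0 e = v")
    case True
    show ?thesis
      by (rule pro_p_group_cont_char_vanishing_on_image[OF pro_p(1,2) b(1) proper(1)])
        (use True e(2) that in auto)
  next
    case False
    with v have "d1 e = v" by simp
    show ?thesis
      by (rule pro_p_group_cont_char_vanishing_on_image[OF pro_p(1,3) b(2) proper(2)])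
        (use False \<open>d1 e = v\<close> that in auto)
  qed
qed

lemma compatible_family_concentrated_at_pending_vertex:
  assumes tree: "tree_of_pro_p_groups p Vs Es d0 d1 VG VT EG ET b0 b1" and p: "0 < p"
    and e: "d0 e \<noteq> d1 e" and unique: "\<forall>e'\<in>Es. d0 e' = v \<or> d1 e' = v \<longrightarrow> e' = e"
    and c: "cont_char (VG v) (VT v) p c"
    and c0: "d0 e = v \<longrightarrow> (\<forall>g\<in>carrier (EG e). c (b0 e g) = 0)"
    and c1: "d1 e = v \<longrightarrow> (\<forall>g\<in>carrier (EG e). c (b1 e g) = 0)"
  shows "compatible_family Vs Es d0 d1 VG VT EG b0 b1 (Zmod p) (discrete_topology (carrier (Zmod p)))
      (\<lambda>u. if u = v then c else (\<lambda>_. 0))"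
  unfolding compatible_family_def
proof (intro conjI ballI)
  fix u assume "u \<in> Vs"
  then have "topspace (VT u) = carrier (VG u)"
    using tree unfolding tree_of_pro_p_groups_def pro_p_group_def profinite_group_def topgroup_def
    by auto
  then show "cont_hom (VG u) (VT u) (Zmod p) (discrete_topology (carrier (Zmod p)))
      (if u = v then c else (\<lambda>_. 0))"
    using c cont_char_zero[OF _ p] by auto
next
  fix e' g assume "e' \<in> Es" "g \<in> carrier (EG e')"
  then show "(if d0 e' = v then c else (\<lambda>_. 0)) (b0 e' g) = (if d1 e' = v then c else (\<lambda>_. 0)) (b1 e' g)"
    using unique c0 c1 e by (cases "d0 e' = v \<or> d1 e' = v") auto
qed

lemma fundamental_pro_p_group_cont_char:
  assumes fund: "fundamental_pro_p_group p Vs Es d0 d1 VG VT EG b0 b1 G T iota"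
    and f: "compatible_family Vs Es d0 d1 VG VT EG b0 b1 (Zmod p) (discrete_topology (carrier (Zmod p))) f"
  obtains \<phi> where "cont_char G T p \<phi>" "\<forall>u\<in>Vs. \<forall>x\<in>carrier (VG u). \<phi> (iota u x) = f u x"
proof -
  have "prime p" using fund unfolding fundamental_pro_p_group_def pro_p_group_def by blast
  then have "\<exists>!\<phi>. \<phi> \<in> extensional (carrier G) \<and>
      cont_hom G T (Zmod p) (discrete_topology (carrier (Zmod p))) \<phi> \<and>
      (\<forall>u\<in>Vs. \<forall>x\<in>carrier (VG u). \<phi> (iota u x) = f u x)"
    using fund f finite_p_group_Zmod unfolding fundamental_pro_p_group_def by blast
  then show ?thesis using that by (metis Zmod_simps(1))
qed

text \<open>If the pending vertex \<open>v\<close> were not in \<open>V\<close>, a character of \<open>\<G>(v)\<close> vanishing on the edge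
  group, extended by zero to the other vertex groups, would induce a nonzero character of \<open>G\<close>
  vanishing on the generating vertex groups.\<close>
lemma pending_vertex_in_top_generating_set:
  assumes tree: "tree_of_pro_p_groups p Vs Es d0 d1 VG VT EG ET b0 b1"
    and reduced: "reduced_tree Es d0 d1 VG EG b0 b1"
    and fund: "fundamental_pro_p_group p Vs Es d0 d1 VG VT EG b0 b1 G T iota"
    and V: "V \<subseteq> Vs" and gen: "generated_by_vertices G T VG iota V"
    and v: "pending_vertex Vs Es d0 d1 v"
  shows "v \<in> V"
proof (rule ccontr)
  assume "v \<notin> V"
  have ft: "finite_tree Vs Es d0 d1" and vV: "v \<in> Vs"
    using tree v unfolding tree_of_pro_p_groups_def pending_vertex_def by auto
  have iota: "compatible_family Vs Es d0 d1 VG VT EG b0 b1 G T iota"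
    and tg: "topgroup G T" and p0: "0 < p"
    using fund unfolding fundamental_pro_p_group_def pro_p_group_def profinite_group_def
    by (auto simp: prime_gt_0_nat)
  then interpret G: group G unfolding topgroup_def by blast
  obtain e where e: "e \<in> Es" "d0 e = v \<or> d1 e = v" "d0 e \<noteq> d1 e"
    and unique: "\<forall>e'\<in>Es. d0 e' = v \<or> d1 e' = v \<longrightarrow> e' = e"
    by (rule pending_vertex_unique_edge[OF ft v])
  obtain c where c: "cont_char (VG v) (VT v) p c" "\<exists>a\<in>carrier (VG v). c a \<noteq> 0"
    and c0: "d0 e = v \<longrightarrow> (\<forall>g\<in>carrier (EG e). c (b0 e g) = 0)"
    and c1: "d1 e = v \<longrightarrow> (\<forall>g\<in>carrier (EG e). c (b1 e g) = 0)"
    by (rule vertex_cont_char_vanishing_on_edge_group[OF tree reduced e(1,3,2)])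
  define f where "f u = (if u = v then c else (\<lambda>_. 0))" for u
  have "compatible_family Vs Es d0 d1 VG VT EG b0 b1 (Zmod p) (discrete_topology (carrier (Zmod p))) f"
    unfolding f_def
    by (rule compatible_family_concentrated_at_pending_vertex[OF tree p0 e(3) unique c(1) c0 c1])
  then obtain \<phi> where \<phi>: "cont_char G T p \<phi>" "\<forall>u\<in>Vs. \<forall>x\<in>carrier (VG u). \<phi> (iota u x) = f u x"
    by (rule fundamental_pro_p_group_cont_char[OF fund])
  have \<phi>_zero: "\<phi> g = 0" if "g \<in> carrier G" for g
  proof (rule G.cont_homs_eq_on_top_generated[OF tg group_Zmod[OF p0] _ \<phi>(1)
        cont_char_zero[OF topgroup_carrier[OF tg] p0] gen[unfolded generated_by_vertices_def] _ that])
    show "\<phi> y = 0" if "y \<in> (\<Union>u\<in>V. iota u ` carrier (VG u))" for y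
      using that \<phi>(2) V \<open>v \<notin> V\<close> unfolding f_def by auto
  qed simp
  obtain a where a: "a \<in> carrier (VG v)" "c a \<noteq> 0" using c(2) by blast
  then have "iota v a \<in> carrier G"
    using iota vV unfolding compatible_family_def cont_hom_def hom_def by auto
  then have "\<phi> (iota v a) = 0" by (rule \<phi>_zero)
  moreover have "\<phi> (iota v a) = c a" using \<phi>(2) vV a(1) unfolding f_def by simp
  ultimately show False using a(2) by simp
qed

theorem lemma2p20:
  fixes p :: nat
    and Vs :: "'v set" and Es :: "'e set" and d0 d1 :: "'e \<Rightarrow> 'v"
    and VG :: "'v \<Rightarrow> ('a, 'b) monoid_scheme" and VT :: "'v \<Rightarrow> 'a topology"
    and EG :: "'e \<Rightarrow> ('a, 'b) monoid_scheme" and ET :: "'e \<Rightarrow> 'a topology"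
    and b0 b1 :: "'e \<Rightarrow> 'a \<Rightarrow> 'a"
    and G :: "('g, 'h) monoid_scheme" and T :: "'g topology" and iota :: "'v \<Rightarrow> 'a \<Rightarrow> 'g"
    and V :: "'v set"
  assumes "Factorial_Ring.prime p"
    and "tree_of_pro_p_groups p Vs Es d0 d1 VG VT EG ET b0 b1"
    and "reduced_tree Es d0 d1 VG EG b0 b1"
    and "fundamental_pro_p_group p Vs Es d0 d1 VG VT EG b0 b1 G T iota"
    and "proper_tree Vs VG iota"
    and "V \<subseteq> Vs"
    and "generated_by_vertices G T VG iota V"
    and "\<And>W. W \<subset> V \<Longrightarrow> \<not> generated_by_vertices G T VG iota W"
  shows "{v. pending_vertex Vs Es d0 d1 v} \<subseteq> V \<and> enat (card V) \<le> dgen G T"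
proof -
  have pp: "pro_p_group p G T" and iota: "compatible_family Vs Es d0 d1 VG VT EG b0 b1 G T iota"
    using assms(4) unfolding fundamental_pro_p_group_def by auto
  then interpret G: group G unfolding pro_p_group_def profinite_group_def topgroup_def by blast
  have "finite V"
    using assms(2,6) finite_subset unfolding tree_of_pro_p_groups_def finite_tree_def by blast
  have "{v. pending_vertex Vs Es d0 d1 v} \<subseteq> V"
    using pending_vertex_in_top_generating_set[OF assms(2,3,4,6,7)] by blast
  moreover have "enat (card V) \<le> dgen G T"
  proof (rule G.card_le_dgen_if_minimal_top_generating_family[OF pp \<open>finite V\<close>])
    show "iota v ` carrier (VG v) \<subseteq> carrier G" if "v \<in> V" for v
      using iota assms(6) that unfolding compatible_family_def cont_hom_def hom_def by auto
    show "top_generates G T (\<Union>v\<in>V. iota v ` carrier (VG v))"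
      using assms(7) unfolding generated_by_vertices_def .
    show "\<not> top_generates G T (\<Union>u\<in>V - {v}. iota u ` carrier (VG u))" if "v \<in> V" for v
      using assms(8)[of "V - {v}"] that unfolding generated_by_vertices_def by blast
  qed
  ultimately show ?thesis ..
qed

end
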